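(* Let $L$ be a principal element lattice and $n\ge1$. The following statements are equivalent: (1) Every proper element of $L$ is a strongly quasi $n$-absorbing element of $L$. (2) For all $a,b\in L$, $a^n=a^nb$ or $a^{n-1}b=a^nb$. (3) For all $a_1,a_2,\dots,a_{n+1}\in L$, $(a_1\wedge a_2\wedge\cdots\wedge a_n)^n\le a_1a_2\cdots a_{n+1}$ or $(a_1\wedge a_2\wedge\cdots\wedge a_n)^{n-1}a_{n+1}\le a_1a_2\cdots a_{n+1}$.
   Context: A multiplicative lattice is a complete lattice $L$ with least element $0$ and compact greatest element $1$, equipped with a commutative, associative product that distributes over arbitrary joins and has $1$ as multiplicative identity. For $x,y\in L$, $(x:y)=\bigvee\{z: zy\le x\}$. An element $e$ is principal if $a\wedge be=((a:e)\wedge b)e$ and $(ae\vee b):e=(b:e)\vee a$ for all $a,b\in L$; a principal element lattice is a multiplicative lattice in which every element is principal. $a^0=1$. A proper element $q$ ($q<1$) is strongly quasi $n$-absorbing if whenever $a,b\in L$ (not necessarily compact) satisfy $a^nb\le q$, then $a^n\le q$ or $a^{n-1}b\le q$. *)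

theory Defs
  imports Main
begin

class multiplicative_lattice = complete_lattice + comm_monoid_mult +
  assumes one_eq_top: "1 = top"
  assumes mult_Sup_distrib: "x * Sup S = Sup ((\<lambda>s. x * s) ` S)"
  assumes top_compact: "top \<le> Sup S \<Longrightarrow> \<exists>F. finite F \<and> F \<subseteq> S \<and> top \<le> Sup F"

definition residual :: "'a::multiplicative_lattice \<Rightarrow> 'a \<Rightarrow> 'a" where
  "residual x y = Sup {z. z * y \<le> x}"

definition principal :: "'a::multiplicative_lattice \<Rightarrow> bool" where
  "principal e \<longleftrightarrow>
     (\<forall>a b. inf a (b * e) = inf (residual a e) b * e) \<and>
     (\<forall>a b. residual (sup (a * e) b) e = sup (residual b e) a)"

definition principal_element_lattice :: "'a::multiplicative_lattice itself \<Rightarrow> bool" where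
  "principal_element_lattice _ \<longleftrightarrow> (\<forall>e::'a. principal e)"

definition strongly_quasi_n_absorbing :: "nat \<Rightarrow> 'a::multiplicative_lattice \<Rightarrow> bool" where
  "strongly_quasi_n_absorbing n q \<longleftrightarrow> q < top \<and>
     (\<forall>a b. a ^ n * b \<le> q \<longrightarrow> a ^ n \<le> q \<or> a ^ (n - 1) * b \<le> q)"

end

theory Submission
  imports Defs
begin

text \<open>Multiplication in a multiplicative lattice is monotone and deflationary
(since \<open>1 = top\<close>), so \<open>a^n b \<le> a^n\<close> and \<open>a^n b \<le> a^(n-1) b\<close> always hold.
Each alternative in (1) and (2) thus just asks one of these two inequalities to be
an equality, which makes (1) and (2) equivalent. For (3), the meet \<open>c\<close> of
\<open>a\<^sub>1, \<dots>, a\<^sub>n\<close> satisfies \<open>c^n a\<^sub>n\<^sub>+\<^sub>1 \<le> a\<^sub>1 \<cdots> a\<^sub>n\<^sub>+\<^sub>1\<close>, so (2) for \<open>c\<close> and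
\<open>a\<^sub>n\<^sub>+\<^sub>1\<close> gives (3); conversely (3) for the sequence \<open>a, \<dots>, a, b\<close> is (2).\<close>

lemma mult_left_mono_ml:
  fixes x y z :: "'a::multiplicative_lattice"
  assumes "x \<le> y"
  shows "z * x \<le> z * y"
proof -
  have "sup (z * x) (z * y) = z * Sup {x, y}"
    using mult_Sup_distrib[of z "{x, y}"] by simp
  also have "\<dots> = z * y"
    using assms by (simp add: sup_absorb2)
  finally show ?thesis
    by (metis sup.cobounded1)
qed

lemma mult_mono_ml:
  fixes x y u v :: "'a::multiplicative_lattice"
  assumes "x \<le> y" and "u \<le> v"
  shows "x * u \<le> y * v"
  using mult_left_mono_ml[OF assms(2), of x] mult_left_mono_ml[OF assms(1), of v]
  by (simp add: mult.commute)

lemma mult_le_left_ml: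
  fixes x y :: "'a::multiplicative_lattice"
  shows "x * y \<le> x"
proof -
  have "y \<le> 1"
    by (simp add: one_eq_top)
  then show ?thesis
    using mult_left_mono_ml[of y 1 x] by simp
qed

lemma power_mult_le_pred_power_mult:
  fixes x b :: "'a::multiplicative_lattice"
  assumes "n \<ge> 1"
  shows "x ^ n * b \<le> x ^ (n - 1) * b"
proof -
  have "x ^ n * b = (x ^ (n - 1) * b) * x"
    using assms by (cases n) (simp_all add: ac_simps)
  then show ?thesis
    by (simp add: mult_le_left_ml)
qed

lemma power_le_prod_ml:
  fixes c :: "'a::multiplicative_lattice"
  assumes "\<And>i. 1 \<le> i \<Longrightarrow> i \<le> k \<Longrightarrow> c \<le> a i"
  shows "c ^ k \<le> (\<Prod>i=1..k. a i)"
  using assms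
proof (induction k)
  case 0
  then show ?case by simp
next
  case (Suc k)
  have "c ^ Suc k = c ^ k * c"
    by (simp add: mult.commute)
  also have "\<dots> \<le> (\<Prod>i=1..k. a i) * a (Suc k)"
    using Suc by (intro mult_mono_ml) auto
  also have "\<dots> = (\<Prod>i=1..Suc k. a i)"
    by (simp add: prod.cl_ivl_Suc)
  finally show ?case .
qed

lemma power_dichotomy_le_iff_eq:
  fixes x b :: "'a::multiplicative_lattice"
  assumes "n \<ge> 1"
  shows "(x ^ n \<le> x ^ n * b \<or> x ^ (n - 1) * b \<le> x ^ n * b) \<longleftrightarrow>
         (x ^ n = x ^ n * b \<or> x ^ (n - 1) * b = x ^ n * b)"
  using mult_le_left_ml[of "x ^ n" b] power_mult_le_pred_power_mult[OF assms, of x b]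
  by (auto intro: order_antisym)

lemma all_strongly_quasi_n_absorbing_iff:
  assumes "n \<ge> 1"
  shows "(\<forall>q::'a::multiplicative_lattice. q < top \<longrightarrow> strongly_quasi_n_absorbing n q) \<longleftrightarrow>
         (\<forall>a b::'a. a ^ n = a ^ n * b \<or> a ^ (n - 1) * b = a ^ n * b)"
proof
  assume absorbing: "\<forall>q::'a. q < top \<longrightarrow> strongly_quasi_n_absorbing n q"
  show "\<forall>a b::'a. a ^ n = a ^ n * b \<or> a ^ (n - 1) * b = a ^ n * b"
  proof (intro allI)
    fix a b :: 'a
    show "a ^ n = a ^ n * b \<or> a ^ (n - 1) * b = a ^ n * b"
    proof (cases "a ^ n * b = top")
      case True
      then have "a ^ n = top"
        using mult_le_left_ml[of "a ^ n" b] top.extremum_uniqueI by metis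
      with True show ?thesis by simp
    next
      case False
      then have "a ^ n \<le> a ^ n * b \<or> a ^ (n - 1) * b \<le> a ^ n * b"
        using absorbing top.not_eq_extremum
        unfolding strongly_quasi_n_absorbing_def by blast
      then show ?thesis
        using power_dichotomy_le_iff_eq[OF assms] by blast
    qed
  qed
next
  assume "\<forall>a b::'a. a ^ n = a ^ n * b \<or> a ^ (n - 1) * b = a ^ n * b"
  then show "\<forall>q::'a. q < top \<longrightarrow> strongly_quasi_n_absorbing n q"
    unfolding strongly_quasi_n_absorbing_def by metis
qed

lemma power_dichotomy_iff_Inf_prod:
  assumes "n \<ge> 1"
  shows "(\<forall>a b::'a::multiplicative_lattice. a ^ n = a ^ n * b \<or> a ^ (n - 1) * b = a ^ n * b) \<longleftrightarrow>
         (\<forall>a :: nat \<Rightarrow> 'a.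
            (INF i\<in>{1..n}. a i) ^ n \<le> (\<Prod>i=1..n+1. a i) \<or>
            (INF i\<in>{1..n}. a i) ^ (n - 1) * a (n + 1) \<le> (\<Prod>i=1..n+1. a i))"
proof
  assume dichotomy: "\<forall>a b::'a. a ^ n = a ^ n * b \<or> a ^ (n - 1) * b = a ^ n * b"
  show "\<forall>a :: nat \<Rightarrow> 'a.
          (INF i\<in>{1..n}. a i) ^ n \<le> (\<Prod>i=1..n+1. a i) \<or>
          (INF i\<in>{1..n}. a i) ^ (n - 1) * a (n + 1) \<le> (\<Prod>i=1..n+1. a i)"
  proof
    fix a :: "nat \<Rightarrow> 'a"
    define c where "c = (INF i\<in>{1..n}. a i)"
    have "c ^ n \<le> (\<Prod>i=1..n. a i)"
      by (rule power_le_prod_ml) (auto simp: c_def intro: INF_lower)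
    then have "c ^ n * a (n + 1) \<le> (\<Prod>i=1..n+1. a i)"
      using mult_mono_ml[OF _ order_refl] by (simp add: prod.cl_ivl_Suc)
    then show "c ^ n \<le> (\<Prod>i=1..n+1. a i) \<or> c ^ (n - 1) * a (n + 1) \<le> (\<Prod>i=1..n+1. a i)"
      using dichotomy[rule_format, of c "a (n + 1)"] by auto
  qed
next
  assume meet_bound: "\<forall>a :: nat \<Rightarrow> 'a.
          (INF i\<in>{1..n}. a i) ^ n \<le> (\<Prod>i=1..n+1. a i) \<or>
          (INF i\<in>{1..n}. a i) ^ (n - 1) * a (n + 1) \<le> (\<Prod>i=1..n+1. a i)"
  show "\<forall>a b::'a. a ^ n = a ^ n * b \<or> a ^ (n - 1) * b = a ^ n * b"
  proof (intro allI)
    fix x b :: 'a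
    define f where "f = (\<lambda>i::nat. if i \<le> n then x else b)"
    have "f ` {1..n} = {x}"
      using assms by (auto simp: f_def image_def)
    then have meet: "(INF i\<in>{1..n}. f i) = x"
      by simp
    have "(\<Prod>i=1..n. f i) = (\<Prod>i=1..n. x)"
      by (rule prod.cong) (auto simp: f_def)
    then have "(\<Prod>i=1..n+1. f i) = x ^ n * b"
      by (simp add: prod.cl_ivl_Suc f_def)
    then have "x ^ n \<le> x ^ n * b \<or> x ^ (n - 1) * b \<le> x ^ n * b"
      using meet_bound[rule_format, of f] meet by (simp add: f_def)
    then show "x ^ n = x ^ n * b \<or> x ^ (n - 1) * b = x ^ n * b"
      using power_dichotomy_le_iff_eq[OF assms] by blast
  qed
qed

theorem mainTheorem14:
  fixes n :: nat
  assumes "principal_element_lattice TYPE('a::multiplicative_lattice)"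
    and "n \<ge> 1"
  shows "((\<forall>q::'a. q < top \<longrightarrow> strongly_quasi_n_absorbing n q) \<longleftrightarrow>
           (\<forall>a b::'a. a ^ n = a ^ n * b \<or> a ^ (n - 1) * b = a ^ n * b)) \<and>
         ((\<forall>a b::'a. a ^ n = a ^ n * b \<or> a ^ (n - 1) * b = a ^ n * b) \<longleftrightarrow>
           (\<forall>a :: nat \<Rightarrow> 'a.
              (INF i\<in>{1..n}. a i) ^ n \<le> (\<Prod>i=1..n+1. a i) \<or>
              (INF i\<in>{1..n}. a i) ^ (n - 1) * a (n + 1) \<le> (\<Prod>i=1..n+1. a i)))"
  using all_strongly_quasi_n_absorbing_iff[OF assms(2)]
    power_dichotomy_iff_Inf_prod[OF assms(2)]
  by blast

end
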